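(* Let $A$ and $B$ be C*-algebras, and let $\{A_\lambda\}_{\lambda\in\Lambda}$ and $\{B_{\lambda'}\}_{\lambda'\in\Lambda'}$ be $\sigma$-complete directed families of separable C*-subalgebras of $A$ and $B$ respectively, each with dense union. Let $\Phi\colon A\to B$ be a $*$-isomorphism. Then there exist clubs $\Lambda_0\subseteq\Lambda$ and $\Lambda_0'\subseteq\Lambda'$ and an order isomorphism $\phi\colon\Lambda_0\to\Lambda_0'$ such that $\Phi[A_\lambda]=B_{\phi(\lambda)}$ for all $\lambda\in\Lambda_0$. If $\Lambda=\Lambda'$, then one can take $\Lambda_0=\Lambda_0'$ and $\phi=\mathrm{id}$, i.e. there is a club $\Lambda_0\subseteq\Lambda$ with $\Phi[A_\lambda]=B_\lambda$ for all $\lambda\in\Lambda_0$.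
   Context: A directed set $\Lambda$ is $\sigma$-complete if every countable directed $Z\subseteq\Lambda$ has a supremum $\sup Z\in\Lambda$. A directed family $\{A_\lambda\}_{\lambda\in\Lambda}$ of subalgebras means $\lambda\preceq\mu$ iff $A_\lambda\subseteq A_\mu$ (so $\lambda\mapsto A_\lambda$ is injective); it is $\sigma$-complete if $\Lambda$ is $\sigma$-complete and for each countable directed $Z\subseteq\Lambda$, $A_{\sup Z}$ is the closure of $\bigcup_{\lambda\in Z}A_\lambda$. A subset $\Lambda_0\subseteq\Lambda$ is a club if it is closed (every countable directed $Z\subseteq\Lambda_0$ has $\sup Z\in\Lambda_0$) and cofinal (every $\lambda\in\Lambda$ is below some element of $\Lambda_0$). *)

theory Defs
  imports "HOL-Analysis.Analysis"
begin

class cstar_algebra = real_normed_algebra + banach +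
  fixes cscale :: "complex \<Rightarrow> 'a \<Rightarrow> 'a" (infixr "*\<^sub>C" 75)
    and adj :: "'a \<Rightarrow> 'a"
  assumes cscale_add_right: "a *\<^sub>C (x + y) = a *\<^sub>C x + a *\<^sub>C y"
    and cscale_add_left: "(a + b) *\<^sub>C x = a *\<^sub>C x + b *\<^sub>C x"
    and cscale_cscale: "a *\<^sub>C (b *\<^sub>C x) = (a * b) *\<^sub>C x"
    and cscale_one: "1 *\<^sub>C x = x"
    and cscale_of_real: "complex_of_real r *\<^sub>C x = r *\<^sub>R x"
    and cscale_mult_left: "(a *\<^sub>C x) * y = a *\<^sub>C (x * y)"
    and cscale_mult_right: "x * (a *\<^sub>C y) = a *\<^sub>C (x * y)"
    and norm_cscale: "norm (a *\<^sub>C x) = cmod a * norm x"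
    and adj_adj: "adj (adj x) = x"
    and adj_add: "adj (x + y) = adj x + adj y"
    and adj_cscale: "adj (a *\<^sub>C x) = cnj a *\<^sub>C adj x"
    and adj_mult: "adj (x * y) = adj y * adj x"
    and cstar_identity: "norm (adj x * x) = (norm x)\<^sup>2"

definition cstar_subalgebra :: "'a::cstar_algebra set \<Rightarrow> bool" where
  "cstar_subalgebra S \<longleftrightarrow> 0 \<in> S \<and> (\<forall>x\<in>S. \<forall>y\<in>S. x + y \<in> S \<and> x * y \<in> S)
     \<and> (\<forall>a x. x \<in> S \<longrightarrow> a *\<^sub>C x \<in> S) \<and> (\<forall>x\<in>S. adj x \<in> S) \<and> closed S"

definition separable_set :: "'a::metric_space set \<Rightarrow> bool" where
  "separable_set S \<longleftrightarrow> (\<exists>D. countable D \<and> D \<subseteq> S \<and> S \<subseteq> closure D)"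

definition star_isomorphism :: "('a::cstar_algebra \<Rightarrow> 'b::cstar_algebra) \<Rightarrow> bool" where
  "star_isomorphism f \<longleftrightarrow> bij f \<and> (\<forall>x y. f (x + y) = f x + f y)
     \<and> (\<forall>a x. f (a *\<^sub>C x) = a *\<^sub>C f x) \<and> (\<forall>x y. f (x * y) = f x * f y)
     \<and> (\<forall>x. f (adj x) = adj (f x))"

text \<open>Index set \<open>\<Lambda>\<close>, family \<open>F\<close>; the order is \<open>l \<preceq> m \<longleftrightarrow> F l \<subseteq> F m\<close>.\<close>

definition directed_by :: "('i \<Rightarrow> 'a set) \<Rightarrow> 'i set \<Rightarrow> bool" where
  "directed_by F Z \<longleftrightarrow> Z \<noteq> {} \<and> (\<forall>x\<in>Z. \<forall>y\<in>Z. \<exists>z\<in>Z. F x \<subseteq> F z \<and> F y \<subseteq> F z)"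

definition is_sup_by :: "('i \<Rightarrow> 'a set) \<Rightarrow> 'i set \<Rightarrow> 'i set \<Rightarrow> 'i \<Rightarrow> bool" where
  "is_sup_by F \<Lambda> Z s \<longleftrightarrow> s \<in> \<Lambda> \<and> (\<forall>z\<in>Z. F z \<subseteq> F s)
     \<and> (\<forall>u\<in>\<Lambda>. (\<forall>z\<in>Z. F z \<subseteq> F u) \<longrightarrow> F s \<subseteq> F u)"

definition sigma_complete_family :: "('i \<Rightarrow> 'a::topological_space set) \<Rightarrow> 'i set \<Rightarrow> bool" where
  "sigma_complete_family F \<Lambda> \<longleftrightarrow> inj_on F \<Lambda> \<and> directed_by F \<Lambda>
     \<and> (\<forall>Z. Z \<subseteq> \<Lambda> \<and> countable Z \<and> directed_by F Z \<longrightarrow>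
            (\<exists>s. is_sup_by F \<Lambda> Z s \<and> F s = closure (\<Union>(F ` Z))))"

definition club_by :: "('i \<Rightarrow> 'a set) \<Rightarrow> 'i set \<Rightarrow> 'i set \<Rightarrow> bool" where
  "club_by F \<Lambda> \<Lambda>0 \<longleftrightarrow> \<Lambda>0 \<subseteq> \<Lambda>
     \<and> (\<forall>Z. Z \<subseteq> \<Lambda>0 \<and> countable Z \<and> directed_by F Z \<longrightarrow> (\<exists>s\<in>\<Lambda>0. is_sup_by F \<Lambda> Z s))
     \<and> (\<forall>l\<in>\<Lambda>. \<exists>m\<in>\<Lambda>0. F l \<subseteq> F m)"

end

theory Submission
  imports Defs
begin

text \<open>A *-isomorphism \<open>\<Phi>\<close> cannot increase norms: for self-adjoint \<open>h\<close>, quasi-invertibility of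
  \<open>\<mu> h\<close> for all \<open>|\<mu>| \<le> R\<close> forces \<open>R \<parallel>h\<parallel> \<le> 1\<close>, and \<open>\<Phi>\<close> preserves quasi-invertibility. Applied
  to \<open>\<Phi>\<close> and its inverse this makes \<open>\<Phi>\<close> an isometry, hence a homeomorphism commuting with
  closures. As \<open>A\<^sub>\<lambda>\<close> is separable and the closed \<open>B\<^sub>\<mu>\<close> form a \<open>\<sigma>\<close>-complete family with dense union,
  \<open>\<Phi>[A\<^sub>\<lambda>]\<close> lies in some \<open>B\<^sub>\<mu>\<close> above any given \<open>\<mu>\<close>, and symmetrically. Alternating these
  enlargements gives chains with \<open>\<Phi>[A\<^sub>\<lambda>\<^sub>n] \<subseteq> B\<^sub>\<mu>\<^sub>n\<^sub>+\<^sub>1\<close> and \<open>B\<^sub>\<mu>\<^sub>n \<subseteq> \<Phi>[A\<^sub>\<lambda>\<^sub>n\<^sub>+\<^sub>1]\<close>, whose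
  suprema therefore match. So the indices \<open>\<lambda>\<close> with \<open>\<Phi>[A\<^sub>\<lambda>]\<close> some \<open>B\<^sub>\<mu>\<close> are cofinal; they are
  closed under countable directed suprema since \<open>\<Phi>\<close> commutes with closures, and \<open>\<mu>\<close> is unique
  since the families are injective. For a common index set with a common order, a single chain
  serves both families and the suprema coincide.\<close>

section \<open>Quasi-inverses and the Neumann series\<close>

text \<open>\<open>spow x n\<close> is \<open>x ^ (n + 1)\<close>; the algebras need not have a unit.\<close>

fun spow :: "'a::real_normed_algebra \<Rightarrow> nat \<Rightarrow> 'a" where
  "spow x 0 = x"
| "spow x (Suc n) = x * spow x n"

text \<open>\<open>y\<close> is the quasi-inverse of \<open>x\<close>: in a unitization, \<open>(1 - x) * (1 - y) = (1 - y) * (1 - x) = 1\<close>.\<close>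

definition quasi_inverse :: "'a::real_normed_algebra \<Rightarrow> 'a \<Rightarrow> bool" where
  "quasi_inverse x y \<longleftrightarrow> x + y = x * y \<and> x + y = y * x"

lemma quasi_inverse_sym: "quasi_inverse x y \<Longrightarrow> quasi_inverse y x"
  by (auto simp: quasi_inverse_def add.commute)

lemma quasi_inverse_unique:
  assumes "quasi_inverse x y" "quasi_inverse x z"
  shows "y = z"
proof -
  have yx: "y * x = x + y" and xz: "x * z = x + z"
    using assms by (auto simp: quasi_inverse_def)
  have "(x + y) * z = y * (x + z)"
    using mult.assoc[of y x z] by (simp only: yx xz)
  then have "x * z + y * z = y * x + y * z"
    by (simp add: algebra_simps)
  then have "x + z = x + y"
    by (simp only: yx xz add_right_cancel)
  then show ?thesis
    by simp
qed

lemma spow_add: "spow x (m + n + 1) = spow x m * spow x n"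
  by (induction m) (auto simp: mult.assoc)

lemma spow_Suc_right: "spow x (Suc n) = spow x n * x"
  using spow_add[of x n 0] by simp

lemma norm_spow_le: "norm (spow x n) \<le> norm x ^ Suc n"
proof (induction n)
  case (Suc n)
  have "norm (spow x (Suc n)) \<le> norm x * norm (spow x n)"
    by (simp add: norm_mult_ineq)
  also have "\<dots> \<le> norm x * norm x ^ Suc n"
    using Suc by (simp add: mult_left_mono)
  finally show ?case by simp
qed simp

text \<open>Neumann series: \<open>- \<Sum>n. x ^ (n + 1)\<close> is the quasi-inverse of \<open>x\<close>.\<close>

lemma quasi_inverse_Neumann:
  fixes x :: "'a::{real_normed_algebra,banach}"
  assumes "norm x < 1"
  shows "\<exists>y. quasi_inverse x y \<and> norm y \<le> norm x / (1 - norm x)"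
proof -
  have geometric: "summable (\<lambda>n. norm x ^ Suc n)"
    using assms by (simp add: summable_geometric)
  have norm_summable: "summable (\<lambda>n. norm (spow x n))"
    by (rule summable_comparison_test[OF _ geometric]) (use norm_spow_le in auto)
  have summable: "summable (spow x)"
    by (rule summable_norm_cancel[OF norm_summable])
  have shift: "suminf (\<lambda>n. spow x (Suc n)) = suminf (spow x) - x"
    using suminf_split_head[OF summable] by simp
  have "x * suminf (spow x) = suminf (spow x) - x"
    using suminf_mult[OF summable, of x] shift by simp
  moreover have "suminf (spow x) * x = suminf (spow x) - x"
    using suminf_mult2[OF summable, of x] shift by (simp only: spow_Suc_right)
  ultimately have "quasi_inverse x (- suminf (spow x))"
    unfolding quasi_inverse_def by (simp add: algebra_simps)
  moreover have "norm (- suminf (spow x)) \<le> (\<Sum>n. norm x ^ Suc n)"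
    using summable_norm[OF norm_summable] suminf_le[OF norm_spow_le norm_summable geometric]
    by simp
  moreover have "(\<Sum>n. norm x ^ Suc n) = norm x / (1 - norm x)"
    using suminf_mult[OF summable_geometric[of "norm x"]] suminf_geometric[of "norm x"] assms
    by simp
  ultimately show ?thesis by auto
qed

lemma norm_quasi_inverse_le:
  fixes x :: "'a::{real_normed_algebra,banach}"
  assumes "norm x \<le> c" "c < 1" "quasi_inverse x y"
  shows "norm y \<le> c / (1 - c)"
proof -
  have "norm x < 1"
    using assms(1,2) by linarith
  then obtain y' where y': "quasi_inverse x y'" "norm y' \<le> norm x / (1 - norm x)"
    using quasi_inverse_Neumann by blast
  have "norm x / (1 - norm x) \<le> c / (1 - c)"
    using assms(1,2) norm_ge_zero[of x] by (intro frac_le) linarith+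
  then show ?thesis
    using y' quasi_inverse_unique[OF assms(3) y'(1)] by simp
qed

lemma quasi_inverse_diff_eq:
  fixes x w y z :: "'a::real_normed_algebra"
  assumes "quasi_inverse x y" "quasi_inverse w z"
  shows "z - y = (x - w) - y * (x - w) - (x - w) * z + y * (x - w) * z"
proof -
  have yx: "y * x = x + y" and wz: "w * z = w + z"
    using assms by (auto simp: quasi_inverse_def)
  have yxz: "y * x * z = x * z + y * z"
    by (simp add: yx distrib_right)
  have ywz: "y * w * z = y * w + y * z"
    by (simp add: mult.assoc wz distrib_left)
  show ?thesis
    by (simp add: algebra_simps yx wz yxz ywz)
qed

section \<open>Norms of self-adjoint elements and quasi-invertibility\<close>

lemma cscale_zero_left [simp]: "0 *\<^sub>C (x::'a::cstar_algebra) = 0"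
  using cscale_of_real[of 0 x] by simp

lemma cscale_zero_right [simp]: "a *\<^sub>C (0::'a::cstar_algebra) = 0"
  using cscale_add_right[of a "0::'a" 0] by simp

lemma cscale_diff_left: "(a - b) *\<^sub>C (x::'a::cstar_algebra) = a *\<^sub>C x - b *\<^sub>C x"
  using cscale_add_left[of "a - b" b x] by (simp add: eq_diff_eq)

lemma cscale_diff_right: "a *\<^sub>C (x - y) = a *\<^sub>C x - a *\<^sub>C (y::'a::cstar_algebra)"
  using cscale_add_right[of a "x - y" y] by (simp add: eq_diff_eq)

lemma cscale_sum_left: "(\<Sum>k\<in>K. c k) *\<^sub>C (x::'a::cstar_algebra) = (\<Sum>k\<in>K. c k *\<^sub>C x)"
  by (induction K rule: infinite_finite_induct) (auto simp: cscale_add_left)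

lemma spow_cscale: "spow (c *\<^sub>C (x::'a::cstar_algebra)) n = (c ^ Suc n) *\<^sub>C spow x n"
  by (induction n) (simp_all only: spow.simps cscale_mult_left cscale_mult_right cscale_cscale
      power_Suc power_0 mult.commute mult_1_left mult_1_right)

lemma adj_spow: "adj h = h \<Longrightarrow> adj (spow h n) = spow (h::'a::cstar_algebra) n"
  by (induction n) (simp_all add: adj_mult spow_Suc_right[symmetric])

lemma norm_spow_selfadjoint:
  fixes h :: "'a::cstar_algebra"
  assumes "adj h = h"
  shows "norm (spow h (2 ^ m - 1)) = norm h ^ (2 ^ m)"
proof (induction m)
  case (Suc m)
  have "(2::nat) ^ Suc m - 1 = (2 ^ m - 1) + (2 ^ m - 1) + 1"
    using one_le_power[of "2::nat" m] by (simp only: power_Suc) arith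
  then have "spow h (2 ^ Suc m - 1) = adj (spow h (2 ^ m - 1)) * spow h (2 ^ m - 1)"
    by (simp only: spow_add adj_spow[OF assms])
  then have "norm (spow h (2 ^ Suc m - 1)) = (norm (spow h (2 ^ m - 1)))\<^sup>2"
    by (simp only: cstar_identity)
  then show ?case
    using Suc by (simp add: power_mult[symmetric] mult.commute)
qed simp

lemma norm_quasi_inverse_diff_le:
  fixes h y z :: "'a::cstar_algebra"
  assumes "quasi_inverse (a *\<^sub>C h) y" "quasi_inverse (b *\<^sub>C h) z"
  shows "norm (z - y) \<le> cmod (a - b) * norm h * ((1 + norm y) * (1 + norm z))"
proof -
  define D where "D = a *\<^sub>C h - b *\<^sub>C h"
  have norm_D: "norm D = cmod (a - b) * norm h"
    by (simp add: D_def cscale_diff_left[symmetric] norm_cscale)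
  have "norm (z - y) = norm (D - y * D - D * z + y * D * z)"
    unfolding D_def by (simp only: quasi_inverse_diff_eq[OF assms])
  also have "\<dots> \<le> norm D + norm (y * D) + norm (D * z) + norm (y * D * z)"
    by (smt (verit) norm_triangle_ineq norm_triangle_ineq4)
  also have "\<dots> \<le> norm D + norm y * norm D + norm D * norm z + norm y * norm D * norm z"
    by (intro add_mono order_refl norm_mult_ineq order_trans[OF norm_mult_ineq] mult_right_mono)
      auto
  also have "\<dots> = norm D * ((1 + norm y) * (1 + norm z))"
    by (simp add: algebra_simps)
  finally show ?thesis
    by (simp add: norm_D)
qed

lemma norm_quasi_inverse_diff_local:
  fixes h y z :: "'a::cstar_algebra"
  assumes "quasi_inverse (a *\<^sub>C h) y" "quasi_inverse (b *\<^sub>C h) z"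
    and small: "cmod (a - b) * norm h * (1 + norm y) \<le> 1/2"
  shows "norm (z - y) \<le> 2 * cmod (a - b) * norm h * (1 + norm y)\<^sup>2"
proof -
  define c where "c = cmod (a - b) * norm h * (1 + norm y)"
  have "norm (z - y) \<le> c * (1 + norm z)"
    using norm_quasi_inverse_diff_le[OF assms(1,2)] by (simp add: c_def mult.assoc)
  also have "\<dots> \<le> c * (1 + norm y + norm (z - y))"
    using norm_triangle_sub[of z y] by (simp add: c_def mult_left_mono)
  finally have "(1 - c) * norm (z - y) \<le> c * (1 + norm y)"
    by (simp add: algebra_simps)
  moreover have "norm (z - y) / 2 \<le> (1 - c) * norm (z - y)"
    using small mult_right_mono[of "1/2" "1 - c" "norm (z - y)"] unfolding c_def[symmetric]
    by simp
  ultimately have "norm (z - y) \<le> 2 * c * (1 + norm y)"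
    by simp
  then show ?thesis
    by (simp add: c_def power2_eq_square mult.assoc)
qed

lemma quasi_inverse_continuous_on:
  fixes h :: "'a::cstar_algebra"
  assumes G: "\<And>\<mu>. \<mu> \<in> S \<Longrightarrow> quasi_inverse (\<mu> *\<^sub>C h) (G \<mu>)"
  shows "continuous_on S G"
  unfolding continuous_on_def
proof
  fix a assume "a \<in> S"
  define K where "K = norm h * (1 + norm (G a))\<^sup>2"
  have dist_to_0: "((\<lambda>b. cmod (a - b) * K) \<longlongrightarrow> 0) (at a within S)"
    by (auto intro!: tendsto_eq_intros)
  have "(1 + norm (G a)) \<le> (1 + norm (G a))\<^sup>2"
    using mult_left_mono[of 1 "1 + norm (G a)" "1 + norm (G a)"] by (simp add: power2_eq_square)
  then have "norm h * (1 + norm (G a)) \<le> K"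
    unfolding K_def by (simp add: mult_left_mono)
  then have "\<forall>\<^sub>F b in at a within S. cmod (a - b) * norm h * (1 + norm (G a)) \<le> 1/2"
    using order_tendstoD(2)[OF dist_to_0, of "1/2"]
    by (auto elim!: eventually_mono) (smt (verit) mult.assoc mult_left_mono norm_ge_zero)
  moreover have "\<forall>\<^sub>F b in at a within S. b \<in> S"
    by (simp add: eventually_at_filter)
  ultimately have "\<forall>\<^sub>F b in at a within S. norm (G b - G a) \<le> 2 * (cmod (a - b) * K)"
  proof eventually_elim
    case (elim b)
    then show ?case
      using norm_quasi_inverse_diff_local[OF G[OF \<open>a \<in> S\<close>] G[of b]]
      by (simp add: K_def mult.assoc)
  qed
  moreover have "((\<lambda>b. 2 * (cmod (a - b) * K)) \<longlongrightarrow> 0) (at a within S)"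
    using tendsto_mult_right_zero[OF dist_to_0] by simp
  ultimately have "((\<lambda>b. G b - G a) \<longlongrightarrow> 0) (at a within S)"
    by (rule Lim_null_comparison)
  then show "(G \<longlongrightarrow> G a) (at a within S)"
    by (simp add: LIM_zero_iff)
qed

definition root_unity :: "nat \<Rightarrow> complex" where
  "root_unity N = exp (2 * of_real pi * \<i> / of_nat N)"

lemma root_unity_power: "root_unity N ^ j = exp (2 * of_real pi * \<i> * of_nat j / of_nat N)"
  unfolding root_unity_def exp_of_nat_mult[symmetric] by (simp add: field_simps)

lemma root_unity_power_power: "0 < N \<Longrightarrow> (root_unity N ^ k) ^ N = 1"
  by (simp add: root_unity_power complex_root_unity)

lemma norm_root_unity_power [simp]: "cmod (root_unity N ^ k) = 1"
  by (simp add: root_unity_def norm_power)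

lemma sum_root_unity_power_eq_0:
  assumes "0 < j" "j < N"
  shows "(\<Sum>k<N. (root_unity N ^ k) ^ j) = 0"
proof -
  have "root_unity N ^ j \<noteq> 1"
    using assms complex_root_unity_eq_1[of N j] by (auto simp: root_unity_power dest: dvd_imp_le)
  moreover have "(root_unity N ^ j) ^ N = 1"
    using assms root_unity_power_power[of N j] by (simp add: power_mult[symmetric] mult.commute)
  moreover have "(\<Sum>k<N. (root_unity N ^ k) ^ j) = (\<Sum>k<N. (root_unity N ^ j) ^ k)"
    by (simp add: power_mult[symmetric] mult.commute)
  ultimately show ?thesis
    by (simp add: sum_gp_strict)
qed

text \<open>In a unitization: \<open>(1 - g) (1 - z\<^sup>n\<^sup>+\<^sup>1) = 1 + z + \<dots> + z\<^sup>n\<close> when \<open>(1 - g) (1 - z) = 1\<close>.\<close>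

lemma quasi_inverse_spow_telescope:
  fixes z g :: "'a::real_normed_algebra"
  assumes "quasi_inverse z g"
  shows "g + spow z n - g * spow z n = - (\<Sum>j<n. spow z j)"
    and "spow z n + g - spow z n * g = - (\<Sum>j<n. spow z j)"
proof -
  have gz: "g * z = z + g" and zg: "z * g = z + g"
    using assms by (auto simp: quasi_inverse_def)
  show "g + spow z n - g * spow z n = - (\<Sum>j<n. spow z j)"
  proof (induction n)
    case (Suc n)
    have "g * spow z (Suc n) = spow z (Suc n) + g * spow z n"
      by (simp add: mult.assoc[symmetric] gz distrib_right)
    then show ?case
      using Suc by (simp add: algebra_simps del: spow.simps)
  qed (simp add: gz)
  show "spow z n + g - spow z n * g = - (\<Sum>j<n. spow z j)"
  proof (induction n)
    case (Suc n)
    have "spow z (Suc n) * g = spow z (Suc n) + spow z n * g"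
      by (simp only: spow_Suc_right mult.assoc zg distrib_left)
    then show ?case
      using Suc by (simp add: algebra_simps del: spow.simps)
  qed (simp add: zg)
qed

lemma cscale_average_const:
  "0 < N \<Longrightarrow> (1 / of_nat N) *\<^sub>C (\<Sum>k<N. (x::'a::cstar_algebra)) = x"
proof -
  have "(\<Sum>k<N. x) = of_nat N *\<^sub>C x"
    using cscale_sum_left[of "\<lambda>_. 1" "{..<N}" x] by (simp add: cscale_one)
  then show "0 < N \<Longrightarrow> ?thesis"
    by (simp add: cscale_cscale cscale_one)
qed

lemma spow_root_unity_scale:
  "0 < N \<Longrightarrow> spow ((r * root_unity N ^ k) *\<^sub>C h) (N - 1) = (r ^ N) *\<^sub>C spow (h::'a::cstar_algebra) (N - 1)"
  using root_unity_power_power[of N k] by (simp add: spow_cscale power_mult_distrib)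

lemma sum_spow_root_unity_eq_0:
  assumes "Suc j < N"
  shows "(\<Sum>k<N. spow ((r * root_unity N ^ k) *\<^sub>C h) j) = (0::'a::cstar_algebra)"
  using sum_root_unity_power_eq_0[of "Suc j" N] assms
  by (simp add: spow_cscale power_mult_distrib cscale_sum_left[symmetric]
      sum_distrib_left[symmetric] del: power_Suc)

definition circle_average :: "(complex \<Rightarrow> 'a::cstar_algebra) \<Rightarrow> nat \<Rightarrow> real \<Rightarrow> 'a" where
  "circle_average G N r = (1 / of_nat N) *\<^sub>C (\<Sum>k<N. G (of_real r * root_unity N ^ k))"

text \<open>All powers \<open>h\<^sup>j\<close> with \<open>0 < j < N\<close> cancel in the average of the telescoped sums.\<close>

lemma quasi_inverse_circle_average:
  fixes h :: "'a::cstar_algebra"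
  assumes G: "\<And>\<mu>. cmod \<mu> = r \<Longrightarrow> quasi_inverse (\<mu> *\<^sub>C h) (G \<mu>)" and "0 \<le> r" "0 < N"
  shows "quasi_inverse ((of_real r ^ N) *\<^sub>C spow h (N - 1)) (circle_average G N r)"
proof -
  define z where "z k = (of_real r * root_unity N ^ k) *\<^sub>C h" for k
  define g where "g k = G (of_real r * root_unity N ^ k)" for k
  define X where "X = (of_real r ^ N) *\<^sub>C spow h (N - 1)"
  have quasi_inverse_z: "quasi_inverse (z k) (g k)" for k
    unfolding z_def g_def using G assms(2) by (simp add: norm_mult)
  have spow_z: "spow (z k) (N - 1) = X" for k
    unfolding z_def X_def by (rule spow_root_unity_scale[OF assms(3)])
  have "(\<Sum>k<N. \<Sum>j<N - 1. spow (z k) j) = 0"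
    by (subst sum.swap) (auto simp: z_def sum_spow_root_unity_eq_0 intro!: sum.neutral)
  then have "(\<Sum>k<N. g k + X - g k * X) = 0" "(\<Sum>k<N. X + g k - X * g k) = 0"
    using quasi_inverse_spow_telescope[OF quasi_inverse_z, of _ "N - 1", unfolded spow_z]
    by (simp_all add: sum_negf)
  moreover have "circle_average G N r + X - circle_average G N r * X
      = (1 / of_nat N) *\<^sub>C (\<Sum>k<N. g k + X - g k * X)"
    and "X + circle_average G N r - X * circle_average G N r
      = (1 / of_nat N) *\<^sub>C (\<Sum>k<N. X + g k - X * g k)"
    unfolding circle_average_def g_def sum.distrib sum_subtractf sum_distrib_left[symmetric]
      sum_distrib_right[symmetric]
    by (simp_all add: cscale_add_right cscale_diff_right cscale_mult_left cscale_mult_right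
        cscale_average_const[OF assms(3)])
  ultimately show ?thesis
    unfolding quasi_inverse_def X_def[symmetric] by (simp add: algebra_simps eq_diff_eq)
qed

lemma norm_circle_average_diff_le:
  fixes G :: "complex \<Rightarrow> 'a::cstar_algebra"
  assumes "0 < N" "\<And>k. norm (G (of_real r' * root_unity N ^ k) - G (of_real r * root_unity N ^ k)) \<le> e"
  shows "norm (circle_average G N r' - circle_average G N r) \<le> e"
proof -
  have "norm (\<Sum>k<N. G (of_real r' * root_unity N ^ k) - G (of_real r * root_unity N ^ k))
      \<le> (\<Sum>k<N. norm (G (of_real r' * root_unity N ^ k) - G (of_real r * root_unity N ^ k)))"
    by (rule norm_sum)
  also have "\<dots> \<le> (\<Sum>k<N. e)"
    by (rule sum_mono) (rule assms(2))
  finally show ?thesis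
    using assms(1)
    by (simp add: circle_average_def norm_cscale norm_divide field_simps sum_subtractf
        flip: cscale_diff_right)
qed

lemma radii_around_inverse:
  fixes \<rho> R d :: real
  assumes "0 < \<rho>" "1 < R * \<rho>" "0 < d"
  obtains r1 r2 where "0 < r1" "r1 < r2" "r2 \<le> R" "r2 - r1 < d" "r1 * \<rho> < 1" "1 < r2 * \<rho>"
proof
  define e where "e = min (d / 2) (min (R - 1 / \<rho>) (1 / \<rho>))"
  have "1 / \<rho> < R"
    using assms by (simp add: field_simps)
  then have e: "0 < e" "e < d" "e \<le> R - 1 / \<rho>" "e \<le> 1 / \<rho>"
    using assms by (auto simp: e_def)
  show "0 < 1 / \<rho> - e / 2" "1 / \<rho> - e / 2 < 1 / \<rho> + e / 2" "1 / \<rho> + e / 2 \<le> R"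
    "(1 / \<rho> + e / 2) - (1 / \<rho> - e / 2) < d"
    using e by auto
  show "(1 / \<rho> - e / 2) * \<rho> < 1" "1 < (1 / \<rho> + e / 2) * \<rho>"
    using e assms(1) by (simp_all add: algebra_simps)
qed

lemma quasi_inverse_uniformly_continuous_disc:
  fixes h :: "'a::cstar_algebra"
  assumes "\<And>\<mu>. cmod \<mu> \<le> R \<Longrightarrow> \<exists>y. quasi_inverse (\<mu> *\<^sub>C h) y" "0 < e"
  obtains G d where "\<And>\<mu>. \<mu> \<in> cball 0 R \<Longrightarrow> quasi_inverse (\<mu> *\<^sub>C h) (G \<mu>)" "0 < d"
    "\<And>x x'. x \<in> cball 0 R \<Longrightarrow> x' \<in> cball 0 R \<Longrightarrow> dist x' x < d \<Longrightarrow> dist (G x') (G x) < e"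
proof -
  obtain G where G: "\<And>\<mu>. \<mu> \<in> cball 0 R \<Longrightarrow> quasi_inverse (\<mu> *\<^sub>C h) (G \<mu>)"
    using assms(1) by (simp add: dist_norm) metis
  have "uniformly_continuous_on (cball 0 R) G"
    using quasi_inverse_continuous_on[of "cball 0 R" h G] G
    by (intro compact_uniformly_continuous) auto
  then show ?thesis
    using that G assms(2) unfolding uniformly_continuous_on_def by metis
qed

text \<open>If \<open>\<mu> h\<close> is quasi-invertible for all \<open>|\<mu>| \<le> R\<close>, then the spectral radius of \<open>h\<close> is at
  most \<open>1 / R\<close>; for self-adjoint \<open>h\<close> it equals \<open>\<parallel>h\<parallel>\<close>. Instead of the spectral radius formula we
  use that the quasi-inverses depend uniformly continuously on \<open>\<mu>\<close>, while their averages over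
  \<open>N\<close>-th roots of unity are quasi-inverses of \<open>r\<^sup>N h\<^sup>N\<close>, whose norm \<open>(r \<parallel>h\<parallel>)\<^sup>N\<close> for
  \<open>N = 2\<^sup>m\<close> jumps from small to large as \<open>r\<close> crosses \<open>1 / \<parallel>h\<parallel>\<close>.\<close>

lemma quasi_invertible_disc_radius:
  fixes h :: "'a::cstar_algebra"
  assumes selfadjoint: "adj h = h"
    and invertible: "\<And>\<mu>. cmod \<mu> \<le> R \<Longrightarrow> \<exists>y. quasi_inverse (\<mu> *\<^sub>C h) y"
  shows "R * norm h \<le> 1"
proof (rule ccontr)
  assume "\<not> R * norm h \<le> 1"
  then have R: "1 < R * norm h" and h: "0 < norm h"
    by (auto simp: le_less)
  obtain G d where G: "\<And>\<mu>. \<mu> \<in> cball 0 R \<Longrightarrow> quasi_inverse (\<mu> *\<^sub>C h) (G \<mu>)" and "0 < d"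
    and d: "\<And>x x'. x \<in> cball 0 R \<Longrightarrow> x' \<in> cball 0 R \<Longrightarrow> dist x' x < d \<Longrightarrow> dist (G x') (G x) < 1/4"
    using quasi_inverse_uniformly_continuous_disc[where e="1/4", OF invertible] by auto
  obtain r1 r2 where r1: "0 < r1" "r1 * norm h < 1" and r2: "r1 < r2" "r2 \<le> R" "1 < r2 * norm h"
    and "r2 - r1 < d"
    using radii_around_inverse[OF h R \<open>0 < d\<close>] .
  obtain m where m: "(r1 * norm h) ^ m < 1/5"
    using real_arch_pow_inv[of "1/5" "r1 * norm h"] r1 by auto
  define N :: nat where "N = 2 ^ m"
  define X where "X r = (of_real r ^ N) *\<^sub>C spow h (N - 1)" for r
  have N: "0 < N" "m \<le> N"
    by (simp_all add: N_def less_imp_le[OF less_exp])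
  have average: "quasi_inverse (X r) (circle_average G N r)" if "0 \<le> r" "r \<le> R" for r
    unfolding X_def using that N(1) G by (intro quasi_inverse_circle_average) auto
  have norm_X: "norm (X r) = (r * norm h) ^ N" if "0 \<le> r" for r
    using norm_spow_selfadjoint[OF selfadjoint, of m] that
    by (simp add: X_def N_def norm_cscale norm_power power_mult_distrib)
  have "(r1 * norm h) ^ N \<le> (r1 * norm h) ^ m"
    using r1 N(2) by (intro power_decreasing) auto
  then have small: "norm (circle_average G N r1) \<le> 1/4"
    using norm_quasi_inverse_le[of "X r1" "1/5", OF _ _ average] r1 r2 m norm_X by simp
  have "dist (G (of_real r2 * root_unity N ^ k)) (G (of_real r1 * root_unity N ^ k)) < 1/4" for k
    using \<open>r2 - r1 < d\<close> r1 r2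
    by (intro d) (auto simp: dist_norm norm_mult left_diff_distrib[symmetric] simp flip: of_real_diff)
  then have "norm (circle_average G N r2 - circle_average G N r1) \<le> 1/4"
    by (intro norm_circle_average_diff_le[OF N(1)]) (simp add: dist_norm less_imp_le)
  then have "norm (circle_average G N r2) \<le> 1/2"
    using small norm_triangle_sub[of "circle_average G N r2" "circle_average G N r1"] by simp
  then have "(r2 * norm h) ^ N \<le> 1"
    using norm_quasi_inverse_le[OF _ _ quasi_inverse_sym[OF average], of r2 "1/2"] r1 r2 norm_X
    by simp
  moreover have "1 < (r2 * norm h) ^ N"
    using r2 N by (intro one_less_power) auto
  ultimately show False
    by simp
qed

section \<open>*-isomorphisms are isometric\<close>

lemma quasi_inverse_star_isomorphism:
  assumes "star_isomorphism \<Phi>" "quasi_inverse x y"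
  shows "quasi_inverse (\<Phi> x) (\<Phi> y)"
proof -
  have "\<Phi> (u + v) = \<Phi> u + \<Phi> v" "\<Phi> (u * v) = \<Phi> u * \<Phi> v" for u v
    using assms(1) by (simp_all add: star_isomorphism_def)
  then show ?thesis
    using assms(2) unfolding quasi_inverse_def by metis
qed

lemma norm_star_isomorphism_le:
  fixes \<Phi> :: "'a::cstar_algebra \<Rightarrow> 'b::cstar_algebra"
  assumes iso: "star_isomorphism \<Phi>"
  shows "norm (\<Phi> x) \<le> norm x"
proof -
  define a where "a = adj x * x"
  have \<Phi>_a: "\<Phi> a = adj (\<Phi> x) * \<Phi> x"
    using iso by (simp add: a_def star_isomorphism_def)
  have selfadjoint: "adj (\<Phi> a) = \<Phi> a"
    by (simp add: \<Phi>_a adj_mult adj_adj)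
  have radius: "R * norm (\<Phi> a) \<le> 1" if "R * norm a < 1" for R
  proof (rule quasi_invertible_disc_radius[OF selfadjoint])
    fix \<mu> :: complex assume "cmod \<mu> \<le> R"
    then have "norm (\<mu> *\<^sub>C a) < 1"
      using that mult_right_mono[of "cmod \<mu>" R "norm a"] by (simp add: norm_cscale)
    then obtain y where "quasi_inverse (\<mu> *\<^sub>C a) y"
      using quasi_inverse_Neumann by blast
    then have "quasi_inverse (\<Phi> (\<mu> *\<^sub>C a)) (\<Phi> y)"
      by (rule quasi_inverse_star_isomorphism[OF iso])
    then show "\<exists>y. quasi_inverse (\<mu> *\<^sub>C \<Phi> a) y"
      using iso by (auto simp: star_isomorphism_def)
  qed
  have "norm (\<Phi> a) \<le> norm a"
  proof (rule ccontr)
    assume "\<not> norm (\<Phi> a) \<le> norm a"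
    then have "2 / (norm a + norm (\<Phi> a)) * norm (\<Phi> a) \<le> 1"
      using radius[of "2 / (norm a + norm (\<Phi> a))"] norm_ge_zero[of a] by (simp add: field_simps)
    then show False
      using \<open>\<not> norm (\<Phi> a) \<le> norm a\<close> norm_ge_zero[of a] by (simp add: field_simps)
  qed
  moreover have "norm (\<Phi> a) = (norm (\<Phi> x))\<^sup>2"
    unfolding \<Phi>_a by (rule cstar_identity)
  moreover have "norm a = (norm x)\<^sup>2"
    unfolding a_def by (rule cstar_identity)
  ultimately have "(norm (\<Phi> x))\<^sup>2 \<le> (norm x)\<^sup>2"
    by simp
  then show ?thesis
    by (rule power2_le_imp_le) simp
qed

lemma inv_preserves_unary:
  assumes "bij f" "\<And>x. f (p x) = q (f x)"
  shows "inv f (q u) = p (inv f u)"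
proof -
  have "f (inv f u) = u"
    using bij_inv_eq_iff[OF assms(1), of "inv f u" u] by simp
  then show ?thesis
    using bij_inv_eq_iff[OF assms(1), of "p (inv f u)" "q u"] assms(2) by simp
qed

lemma inv_preserves_binary:
  assumes "bij f" "\<And>x y. f (p x y) = q (f x) (f y)"
  shows "inv f (q u v) = p (inv f u) (inv f v)"
proof -
  have "f (inv f w) = w" for w
    using bij_inv_eq_iff[OF assms(1), of "inv f w" w] by simp
  then show ?thesis
    using bij_inv_eq_iff[OF assms(1), of "p (inv f u) (inv f v)" "q u v"] assms(2) by simp
qed

lemma star_isomorphism_inv:
  assumes "star_isomorphism \<Phi>"
  shows "star_isomorphism (inv \<Phi>)"
proof -
  have bij: "bij \<Phi>"
    using assms by (simp add: star_isomorphism_def)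
  show ?thesis
    unfolding star_isomorphism_def
  proof (intro conjI allI)
    show "inv \<Phi> (x + y) = inv \<Phi> x + inv \<Phi> y" "inv \<Phi> (x * y) = inv \<Phi> x * inv \<Phi> y"
      "inv \<Phi> (a *\<^sub>C x) = a *\<^sub>C inv \<Phi> x" "inv \<Phi> (adj x) = adj (inv \<Phi> x)" for a x y
      using assms inv_preserves_binary[OF bij, of "(+)" "(+)"] inv_preserves_binary[OF bij, of "(*)" "(*)"]
        inv_preserves_unary[OF bij, of "cscale a" "cscale a"] inv_preserves_unary[OF bij, of adj adj]
      by (simp_all add: star_isomorphism_def)
  qed (rule bij_imp_bij_inv[OF bij])
qed

lemma norm_star_isomorphism:
  fixes \<Phi> :: "'a::cstar_algebra \<Rightarrow> 'b::cstar_algebra"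
  assumes "star_isomorphism \<Phi>"
  shows "norm (\<Phi> x) = norm x"
proof -
  have "inv \<Phi> (\<Phi> x) = x"
    using assms by (simp add: star_isomorphism_def bij_is_inj)
  then have "norm x \<le> norm (\<Phi> x)"
    using norm_star_isomorphism_le[OF star_isomorphism_inv[OF assms], of "\<Phi> x"] by simp
  then show ?thesis
    using norm_star_isomorphism_le[OF assms, of x] by simp
qed

lemma star_isomorphism_bounded_linear:
  fixes \<Phi> :: "'a::cstar_algebra \<Rightarrow> 'b::cstar_algebra"
  assumes "star_isomorphism \<Phi>"
  shows "bounded_linear \<Phi>"
proof (rule bounded_linear_intro[where K = 1])
  show "\<Phi> (x + y) = \<Phi> x + \<Phi> y" "norm (\<Phi> x) \<le> norm x * 1" for x y
    using assms norm_star_isomorphism[OF assms] by (simp_all add: star_isomorphism_def)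
  show "\<Phi> (r *\<^sub>R x) = r *\<^sub>R \<Phi> x" for r x
    using assms by (simp add: star_isomorphism_def flip: cscale_of_real)
qed

lemma star_isomorphism_homeomorphism:
  fixes \<Phi> :: "'a::cstar_algebra \<Rightarrow> 'b::cstar_algebra"
  assumes "star_isomorphism \<Phi>"
  shows "homeomorphism UNIV UNIV \<Phi> (inv \<Phi>)"
proof
  show "continuous_on UNIV \<Phi>" "continuous_on UNIV (inv \<Phi>)"
    using star_isomorphism_bounded_linear[OF assms] star_isomorphism_bounded_linear[OF star_isomorphism_inv[OF assms]]
    by (simp_all add: linear_continuous_on)
  show "inv \<Phi> (\<Phi> x) = x" "\<Phi> (inv \<Phi> y) = y" for x y
    using assms by (simp_all add: star_isomorphism_def bij_is_inj bij_is_surj surj_f_inv_f)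
qed auto

lemma homeomorphism_image_closure:
  assumes "homeomorphism UNIV UNIV f g"
  shows "f ` closure S = closure (f ` S)"
proof
  have cont: "continuous_on UNIV f" "continuous_on UNIV g" and inv: "\<And>x. g (f x) = x" "\<And>y. f (g y) = y"
    using assms by (simp_all add: homeomorphism_def)
  show "f ` closure S \<subseteq> closure (f ` S)"
    using cont(1) by (intro image_closure_subset) (auto intro: continuous_on_subset closure_subset[THEN subsetD])
  have "g ` closure (f ` S) \<subseteq> closure (g ` f ` S)"
    using cont(2) by (intro image_closure_subset) (auto intro: continuous_on_subset closure_subset[THEN subsetD])
  moreover have "g ` f ` S = S"
    using inv(1) by (simp add: image_comp)
  ultimately have "f ` g ` closure (f ` S) \<subseteq> f ` closure S"
    by (intro image_mono) simp
  then show "closure (f ` S) \<subseteq> f ` closure S"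
    using inv(2) by (simp add: image_comp)
qed

section \<open>\<open>\<sigma>\<close>-complete directed families\<close>

lemma sigma_complete_family_sup:
  assumes "sigma_complete_family F \<Lambda>" "Z \<subseteq> \<Lambda>" "countable Z" "directed_by F Z"
  obtains s where "is_sup_by F \<Lambda> Z s" "F s = closure (\<Union>(F ` Z))"
  using assms unfolding sigma_complete_family_def by meson

lemma is_sup_by_unique:
  assumes "inj_on F \<Lambda>" "is_sup_by F \<Lambda> Z s" "is_sup_by F \<Lambda> Z t"
  shows "s = t"
proof -
  have "s \<in> \<Lambda>" "t \<in> \<Lambda>" "F s = F t"
    using assms(2,3) unfolding is_sup_by_def by (simp_all add: subset_antisym)
  then show ?thesis
    using assms(1) by (simp add: inj_on_eq_iff)
qed

lemma sigma_complete_family_inj_on: "sigma_complete_family F \<Lambda> \<Longrightarrow> inj_on F \<Lambda>"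
  by (simp add: sigma_complete_family_def)

lemma sigma_complete_family_directed: "sigma_complete_family F \<Lambda> \<Longrightarrow> directed_by F \<Lambda>"
  by (simp add: sigma_complete_family_def)

lemma directed_by_chain:
  assumes "\<And>n. F (a n) \<subseteq> F (a (Suc n))"
  shows "directed_by F (range a)"
proof -
  have "F (a i) \<subseteq> F (a (max i j)) \<and> F (a j) \<subseteq> F (a (max i j))" for i j
    using lift_Suc_mono_le[of "\<lambda>n. F (a n)", OF assms] by simp
  then show ?thesis
    unfolding directed_by_def by blast
qed

lemma sigma_complete_family_chain_sup:
  assumes "sigma_complete_family F \<Lambda>" "\<And>n. a n \<in> \<Lambda>" "\<And>n. F (a n) \<subseteq> F (a (Suc n))"
  obtains s where "s \<in> \<Lambda>" "F (a 0) \<subseteq> F s" "F s = closure (\<Union>n. F (a n))"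
proof -
  have "range a \<subseteq> \<Lambda>" "countable (range a)"
    using assms(2) by auto
  then obtain s where s: "is_sup_by F \<Lambda> (range a) s" "F s = closure (\<Union>(F ` range a))"
    using sigma_complete_family_sup[OF assms(1) _ _ directed_by_chain[of F a, OF assms(3)]] by metis
  show ?thesis
  proof (rule that)
    show "s \<in> \<Lambda>" "F (a 0) \<subseteq> F s"
      using s(1) unfolding is_sup_by_def by simp_all
    show "F s = closure (\<Union>n. F (a n))"
      using s(2) by (simp add: image_image)
  qed
qed

lemma countable_closure_binop:
  assumes "countable I" "I \<subseteq> S" "\<And>x y. x \<in> S \<Longrightarrow> y \<in> S \<Longrightarrow> f x y \<in> S"
  obtains Z where "I \<subseteq> Z" "Z \<subseteq> S" "countable Z" "\<And>x y. x \<in> Z \<Longrightarrow> y \<in> Z \<Longrightarrow> f x y \<in> Z"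
proof -
  define step where "step Y = Y \<union> (\<lambda>(x, y). f x y) ` (Y \<times> Y)" for Y
  define Z where "Z = (\<Union>n. (step ^^ n) I)"
  have stages: "(step ^^ n) I \<subseteq> S \<and> countable ((step ^^ n) I)" for n
  proof (induction n)
    case (Suc n)
    then show ?case
      using assms(3) by (auto simp: step_def)
  qed (use assms(1,2) in simp)
  have mono: "(step ^^ i) I \<subseteq> (step ^^ j) I" if "i \<le> j" for i j
    using lift_Suc_mono_le[of "\<lambda>n. (step ^^ n) I", OF _ that] by (auto simp: step_def)
  have closed: "f x y \<in> Z" if xy: "x \<in> Z" "y \<in> Z" for x y
  proof -
    obtain i j where "x \<in> (step ^^ i) I" "y \<in> (step ^^ j) I"
      using xy unfolding Z_def by blast
    then have "x \<in> (step ^^ max i j) I" "y \<in> (step ^^ max i j) I"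
      using mono[of i "max i j"] mono[of j "max i j"] by auto
    then show ?thesis
      unfolding Z_def by (intro UN_I[of "Suc (max i j)"]) (auto simp: step_def)
  qed
  have "I \<subseteq> Z" "Z \<subseteq> S" "countable Z"
    using stages by (auto simp: Z_def intro: UN_I[of 0])
  then show ?thesis
    using that closed by blast
qed

lemma directed_by_countable_extension:
  assumes "directed_by F \<Lambda>" "countable I" "I \<subseteq> \<Lambda>" "I \<noteq> {}"
  obtains Z where "I \<subseteq> Z" "Z \<subseteq> \<Lambda>" "countable Z" "directed_by F Z"
proof -
  define ub where "ub x y = (SOME z. z \<in> \<Lambda> \<and> F x \<subseteq> F z \<and> F y \<subseteq> F z)" for x y
  have ub: "ub x y \<in> \<Lambda> \<and> F x \<subseteq> F (ub x y) \<and> F y \<subseteq> F (ub x y)" if "x \<in> \<Lambda>" "y \<in> \<Lambda>" for x y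
  proof -
    have "\<exists>z. z \<in> \<Lambda> \<and> F x \<subseteq> F z \<and> F y \<subseteq> F z"
      using assms(1) that unfolding directed_by_def by blast
    then show ?thesis
      unfolding ub_def by (rule someI_ex)
  qed
  obtain Z where Z: "I \<subseteq> Z" "Z \<subseteq> \<Lambda>" "countable Z" "\<And>x y. x \<in> Z \<Longrightarrow> y \<in> Z \<Longrightarrow> ub x y \<in> Z"
    using countable_closure_binop[OF assms(2,3), of ub] ub by blast
  have "directed_by F Z"
    unfolding directed_by_def
  proof (intro conjI ballI)
    show "Z \<noteq> {}"
      using Z(1) assms(4) by blast
    fix x y assume "x \<in> Z" "y \<in> Z"
    then show "\<exists>z\<in>Z. F x \<subseteq> F z \<and> F y \<subseteq> F z"
      using Z(2,4) ub[of x y] by (intro bexI[of _ "ub x y"]) auto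
  qed
  then show ?thesis
    using that Z(1-3) by blast
qed

lemma chain_from_step:
  assumes "x \<in> S" "\<And>x. x \<in> S \<Longrightarrow> \<exists>y\<in>S. R x y"
  obtains f where "f 0 = x" "\<And>n. f n \<in> S" "\<And>n. R (f n) (f (Suc n))"
proof -
  have "\<forall>x\<in>S. \<exists>y. y \<in> S \<and> R x y"
    using assms(2) by blast
  then obtain g where g: "\<forall>x\<in>S. g x \<in> S \<and> R x (g x)"
    by (rule bchoice[elim_format]) blast
  define f where "f n = (g ^^ n) x" for n
  have f: "f n \<in> S" for n
    by (induction n) (use assms(1) g in \<open>simp_all add: f_def\<close>)
  show ?thesis
  proof (rule that)
    show "f 0 = x"
      by (simp add: f_def)
    show "f n \<in> S" "R (f n) (f (Suc n))" for n
      using g f[of n] by (simp_all add: f_def)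
  qed
qed

lemma sigma_complete_family_bound_countable:
  fixes F :: "'i \<Rightarrow> 'a::metric_space set"
  assumes family: "sigma_complete_family F \<Lambda>" and dense: "closure (\<Union>(F ` \<Lambda>)) = UNIV"
    and "countable D" "l \<in> \<Lambda>"
  shows "\<exists>m\<in>\<Lambda>. F l \<subseteq> F m \<and> D \<subseteq> F m"
proof -
  have "\<forall>d. \<exists>u. (\<forall>n. u n \<in> \<Union>(F ` \<Lambda>)) \<and> u \<longlonglongrightarrow> d"
    using dense closure_sequential[of _ "\<Union>(F ` \<Lambda>)"] by auto
  then obtain u where u: "\<And>d n. u d n \<in> \<Union>(F ` \<Lambda>)" "\<And>d. u d \<longlonglongrightarrow> d"
    by (auto dest!: choice)
  define i where "i d n = (SOME i. i \<in> \<Lambda> \<and> u d n \<in> F i)" for d n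
  have i: "i d n \<in> \<Lambda>" "u d n \<in> F (i d n)" for d n
    using someI_ex[of "\<lambda>i. i \<in> \<Lambda> \<and> u d n \<in> F i"] u(1)[of d n] unfolding i_def by auto
  define I where "I = insert l (\<Union>d\<in>D. range (i d))"
  have "directed_by F \<Lambda>"
    using family by (simp add: sigma_complete_family_def)
  moreover have "countable I" "I \<subseteq> \<Lambda>"
    using assms(3,4) i(1) by (auto simp: I_def)
  ultimately obtain Z where Z: "I \<subseteq> Z" "Z \<subseteq> \<Lambda>" "countable Z" "directed_by F Z"
    using directed_by_countable_extension[of F \<Lambda> I] by (auto simp: I_def)
  obtain m where m: "is_sup_by F \<Lambda> Z m" "F m = closure (\<Union>(F ` Z))"
    using sigma_complete_family_sup[OF family Z(2-4)] .
  have D: "D \<subseteq> F m"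
  proof
    fix d assume "d \<in> D"
    have "i d n \<in> Z" for n
      using Z(1) \<open>d \<in> D\<close> by (auto simp: I_def)
    then have "\<forall>n. u d n \<in> \<Union>(F ` Z)"
      using i(2) by blast
    then show "d \<in> F m"
      unfolding m(2) closure_sequential using u(2) by blast
  qed
  have "l \<in> Z"
    using Z(1) by (simp add: I_def)
  then have "m \<in> \<Lambda> \<and> F l \<subseteq> F m"
    using m(1) unfolding is_sup_by_def by auto
  then show ?thesis
    using D by blast
qed

lemma sigma_complete_family_bound_image:
  fixes F :: "'i \<Rightarrow> 'b::metric_space set" and f :: "'a::metric_space \<Rightarrow> 'b"
  assumes "sigma_complete_family F \<Lambda>" "closure (\<Union>(F ` \<Lambda>)) = UNIV" "\<And>l. l \<in> \<Lambda> \<Longrightarrow> closed (F l)"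
    and "separable_set S" "continuous_on UNIV f" "l \<in> \<Lambda>"
  shows "\<exists>m\<in>\<Lambda>. F l \<subseteq> F m \<and> f ` S \<subseteq> F m"
proof -
  obtain D where D: "countable D" "D \<subseteq> S" "S \<subseteq> closure D"
    using assms(4) unfolding separable_set_def by blast
  obtain m where m: "m \<in> \<Lambda>" "F l \<subseteq> F m" "f ` D \<subseteq> F m"
    using sigma_complete_family_bound_countable[OF assms(1,2) _ assms(6), of "f ` D"] D by blast
  have "f ` closure D \<subseteq> F m"
    using m assms(3,5) by (intro image_closure_subset) (auto intro: continuous_on_subset)
  then show ?thesis
    using m D by blast
qed

lemma image_Union_interleaved:
  assumes "\<And>n. f ` X n \<subseteq> Y (Suc n)" "\<And>n. Y n \<subseteq> f ` X (Suc n)"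
  shows "f ` (\<Union>n. X n) = (\<Union>n. Y n)"
  using assms by (fastforce simp: image_UN)


lemma directed_by_image:
  assumes "directed_by A Z" "\<And>z. z \<in> Z \<Longrightarrow> f ` A z = B (\<phi> z)"
  shows "directed_by B (\<phi> ` Z)"
  unfolding directed_by_def
proof (intro conjI ballI)
  show "\<phi> ` Z \<noteq> {}"
    using assms(1) by (simp add: directed_by_def)
  fix x' y' assume "x' \<in> \<phi> ` Z" "y' \<in> \<phi> ` Z"
  then obtain x y where xy: "x \<in> Z" "y \<in> Z" "x' = \<phi> x" "y' = \<phi> y"
    by blast
  then obtain z where "z \<in> Z" "A x \<subseteq> A z" "A y \<subseteq> A z"
    using assms(1) unfolding directed_by_def by blast
  then show "\<exists>z'\<in>\<phi> ` Z. B x' \<subseteq> B z' \<and> B y' \<subseteq> B z'"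
    using xy assms(2) by (metis image_eqI image_mono)
qed

section \<open>Clubs of matching indices\<close>

locale matching_families =
  fixes A :: "'i \<Rightarrow> 'a::metric_space set" and \<Lambda> :: "'i set"
    and B :: "'j \<Rightarrow> 'b::metric_space set" and \<Lambda>' :: "'j set"
    and \<Phi> :: "'a \<Rightarrow> 'b" and \<Psi> :: "'b \<Rightarrow> 'a"
  assumes A_family: "sigma_complete_family A \<Lambda>"
    and A_closed: "\<And>l. l \<in> \<Lambda> \<Longrightarrow> closed (A l)"
    and A_separable: "\<And>l. l \<in> \<Lambda> \<Longrightarrow> separable_set (A l)"
    and A_dense: "closure (\<Union>(A ` \<Lambda>)) = UNIV"
    and B_family: "sigma_complete_family B \<Lambda>'"
    and B_closed: "\<And>l. l \<in> \<Lambda>' \<Longrightarrow> closed (B l)"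
    and B_separable: "\<And>l. l \<in> \<Lambda>' \<Longrightarrow> separable_set (B l)"
    and B_dense: "closure (\<Union>(B ` \<Lambda>')) = UNIV"
    and homeo: "homeomorphism UNIV UNIV \<Phi> \<Psi>"
begin

lemma homeomorphism_inverse [simp]: "\<Psi> (\<Phi> x) = x" "\<Phi> (\<Psi> y) = y"
  using homeo by (simp_all add: homeomorphism_def)

lemma image_inverse [simp]: "\<Phi> ` \<Psi> ` Y = Y" "\<Psi> ` \<Phi> ` X = X"
  by (simp_all add: image_comp)

lemma image_inverse_eq_iff: "\<Psi> ` B l' = A l \<longleftrightarrow> \<Phi> ` A l = B l'"
proof
  show "\<Psi> ` B l' = A l \<Longrightarrow> \<Phi> ` A l = B l'"
    using image_inverse(1)[of "B l'"] by simp
  show "\<Phi> ` A l = B l' \<Longrightarrow> \<Psi> ` B l' = A l"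
    using image_inverse(2)[of "A l"] by simp
qed

lemma image_bound:
  assumes "l \<in> \<Lambda>" "l' \<in> \<Lambda>'"
  shows "\<exists>m'\<in>\<Lambda>'. B l' \<subseteq> B m' \<and> \<Phi> ` A l \<subseteq> B m'"
  using homeo sigma_complete_family_bound_image[OF B_family B_dense B_closed A_separable[OF assms(1)] _ assms(2)]
  by (simp add: homeomorphism_def)

lemma preimage_bound:
  assumes "l' \<in> \<Lambda>'" "l \<in> \<Lambda>"
  shows "\<exists>m\<in>\<Lambda>. A l \<subseteq> A m \<and> B l' \<subseteq> \<Phi> ` A m"
proof -
  have "continuous_on UNIV \<Psi>"
    using homeo by (simp add: homeomorphism_def)
  then obtain m where m: "m \<in> \<Lambda>" "A l \<subseteq> A m" "\<Psi> ` B l' \<subseteq> A m"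
    using sigma_complete_family_bound_image[OF A_family A_dense A_closed B_separable[OF assms(1)] _ assms(2)]
    by blast
  moreover have "B l' \<subseteq> \<Phi> ` A m"
    using image_mono[OF m(3), of \<Phi>] by simp
  ultimately show ?thesis
    by blast
qed

definition matched :: "'i set" where
  "matched = {l\<in>\<Lambda>. \<exists>l'\<in>\<Lambda>'. \<Phi> ` A l = B l'}"

lemma image_closure: "\<Phi> ` closure S = closure (\<Phi> ` S)"
  by (rule homeomorphism_image_closure[OF homeo])

lemma matched_closed:
  assumes Z: "Z \<subseteq> matched" "countable Z" "directed_by A Z"
  shows "\<exists>s\<in>matched. is_sup_by A \<Lambda> Z s"
proof -
  have "\<forall>z\<in>Z. \<exists>l'. l' \<in> \<Lambda>' \<and> \<Phi> ` A z = B l'"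
    using Z(1) unfolding matched_def by blast
  then obtain \<phi> where \<phi>: "\<forall>z\<in>Z. \<phi> z \<in> \<Lambda>' \<and> \<Phi> ` A z = B (\<phi> z)"
    by (rule bchoice[elim_format]) blast
  have "Z \<subseteq> \<Lambda>"
    using Z(1) unfolding matched_def by blast
  then obtain s where s: "is_sup_by A \<Lambda> Z s" "A s = closure (\<Union>(A ` Z))"
    using sigma_complete_family_sup[OF A_family _ Z(2,3)] by blast
  have "\<phi> ` Z \<subseteq> \<Lambda>'" "countable (\<phi> ` Z)" "directed_by B (\<phi> ` Z)"
    using \<phi> Z(2) directed_by_image[OF Z(3), of \<Phi> B \<phi>] by auto
  then obtain s' where s': "is_sup_by B \<Lambda>' (\<phi> ` Z) s'" "B s' = closure (\<Union>(B ` \<phi> ` Z))"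
    using sigma_complete_family_sup[OF B_family] by blast
  have "\<Phi> ` \<Union>(A ` Z) = \<Union>(B ` \<phi> ` Z)"
    using \<phi> by (auto simp: image_UN)
  then have "\<Phi> ` A s = B s'"
    by (simp add: s(2) s'(2) image_closure)
  moreover have "s \<in> \<Lambda>" "s' \<in> \<Lambda>'"
    using s(1) s'(1) by (simp_all add: is_sup_by_def)
  ultimately show ?thesis
    using s(1) unfolding matched_def by blast
qed

lemma back_and_forth_step:
  assumes "x \<in> \<Lambda>" "x' \<in> \<Lambda>'"
  shows "\<exists>y\<in>\<Lambda>. \<exists>y'\<in>\<Lambda>'. A x \<subseteq> A y \<and> B x' \<subseteq> B y' \<and> \<Phi> ` A x \<subseteq> B y' \<and> B x' \<subseteq> \<Phi> ` A y"
proof -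
  obtain y' where y': "y' \<in> \<Lambda>'" "B x' \<subseteq> B y'" "\<Phi> ` A x \<subseteq> B y'"
    using image_bound[OF assms] by blast
  obtain y where y: "y \<in> \<Lambda>" "A x \<subseteq> A y" "B y' \<subseteq> \<Phi> ` A y"
    using preimage_bound[OF y'(1) assms(1)] by blast
  show ?thesis
    using y y' by blast
qed

lemma matched_cofinal:
  assumes "l \<in> \<Lambda>"
  shows "\<exists>m\<in>matched. A l \<subseteq> A m"
proof -
  define R where "R p q \<longleftrightarrow> A (fst p) \<subseteq> A (fst q) \<and> B (snd p) \<subseteq> B (snd q)
    \<and> \<Phi> ` A (fst p) \<subseteq> B (snd q) \<and> B (snd p) \<subseteq> \<Phi> ` A (fst q)" for p q
  have step: "\<exists>q\<in>\<Lambda> \<times> \<Lambda>'. R p q" if "p \<in> \<Lambda> \<times> \<Lambda>'" for p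
  proof -
    have "fst p \<in> \<Lambda>" "snd p \<in> \<Lambda>'"
      using that by (simp_all add: mem_Times_iff)
    then obtain y y' where "y \<in> \<Lambda>" "y' \<in> \<Lambda>'" "A (fst p) \<subseteq> A y" "B (snd p) \<subseteq> B y'"
      "\<Phi> ` A (fst p) \<subseteq> B y'" "B (snd p) \<subseteq> \<Phi> ` A y"
      using back_and_forth_step by blast
    then show ?thesis
      by (intro bexI[of _ "(y, y')"]) (simp_all add: R_def)
  qed
  obtain l' where "l' \<in> \<Lambda>'"
    using sigma_complete_family_directed[OF B_family] unfolding directed_by_def by blast
  then obtain p where p: "p 0 = (l, l')" "\<And>n. p n \<in> \<Lambda> \<times> \<Lambda>'" "\<And>n. R (p n) (p (Suc n))"
    using chain_from_step[of "(l, l')" "\<Lambda> \<times> \<Lambda>'" R, OF _ step] assms by blast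
  define a where "a n = fst (p n)" for n
  define b where "b n = snd (p n)" for n
  have a: "a n \<in> \<Lambda>" "A (a n) \<subseteq> A (a (Suc n))" and b: "b n \<in> \<Lambda>'" "B (b n) \<subseteq> B (b (Suc n))"
    and interleaved: "\<Phi> ` A (a n) \<subseteq> B (b (Suc n))" "B (b n) \<subseteq> \<Phi> ` A (a (Suc n))" for n
    using p(2,3)[of n] unfolding a_def b_def R_def by (auto simp: mem_Times_iff)
  obtain s where s: "s \<in> \<Lambda>" "A (a 0) \<subseteq> A s" "A s = closure (\<Union>n. A (a n))"
    using sigma_complete_family_chain_sup[of A \<Lambda> a, OF A_family a] .
  obtain s' where s': "s' \<in> \<Lambda>'" "B (b 0) \<subseteq> B s'" "B s' = closure (\<Union>n. B (b n))"
    using sigma_complete_family_chain_sup[of B \<Lambda>' b, OF B_family b] .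
  have "\<Phi> ` A s = B s'"
    unfolding s(3) s'(3) image_closure
    using image_Union_interleaved[of \<Phi> "\<lambda>n. A (a n)" "\<lambda>n. B (b n)", OF interleaved] by simp
  then have "s \<in> matched"
    using s(1) s'(1) unfolding matched_def by blast
  moreover have "a 0 = l"
    using p(1) by (simp add: a_def)
  ultimately show ?thesis
    using s(2) by blast
qed

lemma club_matched: "club_by A \<Lambda> matched"
  unfolding club_by_def using matched_closed matched_cofinal by (auto simp: matched_def)

lemma matching_families_sym: "matching_families B \<Lambda>' A \<Lambda> \<Psi> \<Phi>"
  using A_family A_closed A_separable A_dense B_family B_closed B_separable B_dense
    homeomorphism_symD[OF homeo]
  by unfold_locales

lemma club_matched_image: "club_by B \<Lambda>' {l'\<in>\<Lambda>'. \<exists>l\<in>\<Lambda>. \<Phi> ` A l = B l'}"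
proof -
  interpret sym: matching_families B \<Lambda>' A \<Lambda> \<Psi> \<Phi>
    by (rule matching_families_sym)
  show ?thesis
    using sym.club_matched unfolding sym.matched_def image_inverse_eq_iff .
qed

definition matched_index :: "'i \<Rightarrow> 'j" where
  "matched_index l = (SOME l'. l' \<in> \<Lambda>' \<and> \<Phi> ` A l = B l')"

lemma matched_index:
  assumes "l \<in> matched"
  shows "matched_index l \<in> \<Lambda>'" "\<Phi> ` A l = B (matched_index l)"
  using assms someI_ex[of "\<lambda>l'. l' \<in> \<Lambda>' \<and> \<Phi> ` A l = B l'"]
  unfolding matched_def matched_index_def by blast+

lemma matched_index_order:
  assumes "l \<in> matched" "m \<in> matched"
  shows "A l \<subseteq> A m \<longleftrightarrow> B (matched_index l) \<subseteq> B (matched_index m)"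
proof -
  have "inj \<Phi>"
    by (rule inj_on_inverseI[of _ \<Psi>]) simp
  then show ?thesis
    using matched_index(2)[OF assms(1)] matched_index(2)[OF assms(2)] by (metis inj_image_subset_iff)
qed

lemma bij_betw_matched_index:
  "bij_betw matched_index matched {l'\<in>\<Lambda>'. \<exists>l\<in>\<Lambda>. \<Phi> ` A l = B l'}"
proof (rule bij_betw_imageI)
  show "inj_on matched_index matched"
  proof (rule inj_onI)
    fix l m assume lm: "l \<in> matched" "m \<in> matched" "matched_index l = matched_index m"
    then have "A l = A m"
      using matched_index_order[of l m] matched_index_order[of m l] by auto
    moreover have "l \<in> \<Lambda>" "m \<in> \<Lambda>"
      using lm(1,2) by (simp_all add: matched_def)
    ultimately show "l = m"
      using sigma_complete_family_inj_on[OF A_family] by (rule inj_onD[rotated])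
  qed
  show "matched_index ` matched = {l'\<in>\<Lambda>'. \<exists>l\<in>\<Lambda>. \<Phi> ` A l = B l'}"
  proof
    show "matched_index ` matched \<subseteq> {l'\<in>\<Lambda>'. \<exists>l\<in>\<Lambda>. \<Phi> ` A l = B l'}"
    proof (rule image_subsetI)
      fix l assume "l \<in> matched"
      then show "matched_index l \<in> {l'\<in>\<Lambda>'. \<exists>l\<in>\<Lambda>. \<Phi> ` A l = B l'}"
        using matched_index[of l] by (auto simp: matched_def)
    qed
    show "{l'\<in>\<Lambda>'. \<exists>l\<in>\<Lambda>. \<Phi> ` A l = B l'} \<subseteq> matched_index ` matched"
    proof
      fix l' assume "l' \<in> {l'\<in>\<Lambda>'. \<exists>l\<in>\<Lambda>. \<Phi> ` A l = B l'}"
      then obtain l where l: "l' \<in> \<Lambda>'" "l \<in> \<Lambda>" "\<Phi> ` A l = B l'"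
        by blast
      then have "l \<in> matched"
        unfolding matched_def by blast
      then have "matched_index l = l'"
        using matched_index[of l] l(1,3) inj_onD[OF sigma_complete_family_inj_on[OF B_family]] by simp
      then show "l' \<in> matched_index ` matched"
        using \<open>l \<in> matched\<close> by blast
    qed
  qed
qed

lemma matched_clubs:
  "\<exists>\<Lambda>0 \<Lambda>0' \<phi>. club_by A \<Lambda> \<Lambda>0 \<and> club_by B \<Lambda>' \<Lambda>0' \<and> bij_betw \<phi> \<Lambda>0 \<Lambda>0'
    \<and> (\<forall>l\<in>\<Lambda>0. \<forall>m\<in>\<Lambda>0. A l \<subseteq> A m \<longleftrightarrow> B (\<phi> l) \<subseteq> B (\<phi> m)) \<and> (\<forall>l\<in>\<Lambda>0. \<Phi> ` A l = B (\<phi> l))"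
proof (intro exI conjI ballI)
  show "club_by A \<Lambda> matched" "club_by B \<Lambda>' {l'\<in>\<Lambda>'. \<exists>l\<in>\<Lambda>. \<Phi> ` A l = B l'}"
    "bij_betw matched_index matched {l'\<in>\<Lambda>'. \<exists>l\<in>\<Lambda>. \<Phi> ` A l = B l'}"
    by (fact club_matched club_matched_image bij_betw_matched_index)+
  show "A l \<subseteq> A m \<longleftrightarrow> B (matched_index l) \<subseteq> B (matched_index m)" if "l \<in> matched" "m \<in> matched" for l m
    using that by (rule matched_index_order)
  show "\<Phi> ` A l = B (matched_index l)" if "l \<in> matched" for l
    using that by (rule matched_index(2))
qed

end

locale common_index_families = matching_families A \<Lambda> B \<Lambda> \<Phi> \<Psi>
  for A :: "'i \<Rightarrow> 'a::metric_space set" and \<Lambda> and B :: "'i \<Rightarrow> 'b::metric_space set" and \<Phi> \<Psi> +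
  assumes same_order: "\<And>l m. l \<in> \<Lambda> \<Longrightarrow> m \<in> \<Lambda> \<Longrightarrow> A l \<subseteq> A m \<longleftrightarrow> B l \<subseteq> B m"
begin

lemma common_sup:
  assumes Z: "Z \<subseteq> \<Lambda>" "countable Z" "directed_by A Z"
  obtains s where "is_sup_by A \<Lambda> Z s" "A s = closure (\<Union>(A ` Z))" "B s = closure (\<Union>(B ` Z))"
proof -
  have order: "A l \<subseteq> A m \<longleftrightarrow> B l \<subseteq> B m" if "l \<in> Z" "m \<in> \<Lambda>" for l m
    using same_order that Z(1) by blast
  obtain s where s: "is_sup_by A \<Lambda> Z s" "A s = closure (\<Union>(A ` Z))"
    using sigma_complete_family_sup[OF A_family Z] .
  have "directed_by B Z"
    unfolding directed_by_def
  proof (intro conjI ballI)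
    show "Z \<noteq> {}"
      using Z(3) by (simp add: directed_by_def)
    fix x y assume "x \<in> Z" "y \<in> Z"
    then obtain z where "z \<in> Z" "A x \<subseteq> A z" "A y \<subseteq> A z"
      using Z(3) unfolding directed_by_def by blast
    then show "\<exists>z\<in>Z. B x \<subseteq> B z \<and> B y \<subseteq> B z"
      using order \<open>x \<in> Z\<close> \<open>y \<in> Z\<close> Z(1) by blast
  qed
  then obtain t where t: "is_sup_by B \<Lambda> Z t" "B t = closure (\<Union>(B ` Z))"
    using sigma_complete_family_sup[OF B_family Z(1,2)] by blast
  have "s \<in> \<Lambda>" "\<forall>z\<in>Z. A z \<subseteq> A s" "\<forall>u\<in>\<Lambda>. (\<forall>z\<in>Z. A z \<subseteq> A u) \<longrightarrow> A s \<subseteq> A u"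
    using s(1) unfolding is_sup_by_def by blast+
  then have "is_sup_by B \<Lambda> Z s"
    unfolding is_sup_by_def using order same_order by simp
  then have "s = t"
    using is_sup_by_unique[OF sigma_complete_family_inj_on[OF B_family] _ t(1)] by simp
  then show ?thesis
    using that s t by blast
qed

definition fixed :: "'i set" where
  "fixed = {l\<in>\<Lambda>. \<Phi> ` A l = B l}"

lemma fixed_closed:
  assumes Z: "Z \<subseteq> fixed" "countable Z" "directed_by A Z"
  shows "\<exists>s\<in>fixed. is_sup_by A \<Lambda> Z s"
proof -
  have "Z \<subseteq> \<Lambda>"
    using Z(1) by (auto simp: fixed_def)
  then obtain s where s: "is_sup_by A \<Lambda> Z s" "A s = closure (\<Union>(A ` Z))" "B s = closure (\<Union>(B ` Z))"
    using common_sup Z(2,3) by blast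
  have "\<And>z. z \<in> Z \<Longrightarrow> \<Phi> ` A z = B z"
    using Z(1) by (auto simp: fixed_def)
  then have "\<Phi> ` \<Union>(A ` Z) = \<Union>(B ` Z)"
    by (simp add: image_UN)
  then have "\<Phi> ` A s = B s"
    by (simp add: s(2,3) image_closure)
  then show ?thesis
    using s(1) unfolding fixed_def is_sup_by_def by blast
qed

lemma fixed_step:
  assumes "x \<in> \<Lambda>"
  shows "\<exists>y\<in>\<Lambda>. A x \<subseteq> A y \<and> \<Phi> ` A x \<subseteq> B y \<and> B x \<subseteq> \<Phi> ` A y"
proof -
  obtain y y' where y: "y \<in> \<Lambda>" "A x \<subseteq> A y" "B x \<subseteq> \<Phi> ` A y" and y': "y' \<in> \<Lambda>" "\<Phi> ` A x \<subseteq> B y'"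
    using back_and_forth_step[OF assms assms] by blast
  obtain u where u: "u \<in> \<Lambda>" "A y \<subseteq> A u" "A y' \<subseteq> A u"
    using sigma_complete_family_directed[OF A_family] y(1) y'(1) unfolding directed_by_def by blast
  have "B y' \<subseteq> B u"
    using same_order[OF y'(1) u(1)] u(3) by blast
  moreover have "\<Phi> ` A y \<subseteq> \<Phi> ` A u"
    by (rule image_mono[OF u(2)])
  ultimately have "A x \<subseteq> A u \<and> \<Phi> ` A x \<subseteq> B u \<and> B x \<subseteq> \<Phi> ` A u"
    using u(2) y(2,3) y'(2) by (meson subset_trans)
  then show ?thesis
    using u(1) by blast
qed

lemma fixed_cofinal:
  assumes "l \<in> \<Lambda>"
  shows "\<exists>m\<in>fixed. A l \<subseteq> A m"
proof -
  obtain a where a: "a 0 = l" "\<And>n. a n \<in> \<Lambda>"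
    and chain: "\<And>n. A (a n) \<subseteq> A (a (Suc n)) \<and> \<Phi> ` A (a n) \<subseteq> B (a (Suc n)) \<and> B (a n) \<subseteq> \<Phi> ` A (a (Suc n))"
    using chain_from_step[of l \<Lambda>
        "\<lambda>x y. A x \<subseteq> A y \<and> \<Phi> ` A x \<subseteq> B y \<and> B x \<subseteq> \<Phi> ` A y", OF assms fixed_step]
    by blast
  have "A (a n) \<subseteq> A (a (Suc n))" for n
    using chain by blast
  then have "range a \<subseteq> \<Lambda>" "countable (range a)" "directed_by A (range a)"
    using a(2) directed_by_chain[of A a] by auto
  then obtain s where s: "is_sup_by A \<Lambda> (range a) s"
    "A s = closure (\<Union>n. A (a n))" "B s = closure (\<Union>n. B (a n))"
    using common_sup by (metis image_image)
  have "\<Phi> ` A s = B s"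
    unfolding s(2,3) image_closure
    using image_Union_interleaved[of \<Phi> "\<lambda>n. A (a n)" "\<lambda>n. B (a n)"] chain by simp
  moreover have "s \<in> \<Lambda>" "A (a 0) \<subseteq> A s"
    using s(1) unfolding is_sup_by_def by auto
  ultimately show ?thesis
    using a(1) unfolding fixed_def by blast
qed

lemma club_fixed: "club_by A \<Lambda> fixed"
  unfolding club_by_def using fixed_closed fixed_cofinal by (auto simp: fixed_def)

end

theorem proposition2p12:
  fixes \<Phi> :: "'a::cstar_algebra \<Rightarrow> 'b::cstar_algebra"
    and A :: "'i \<Rightarrow> 'a set" and B :: "'i \<Rightarrow> 'b set"
    and \<Lambda> \<Lambda>' :: "'i set"
  assumes A_fam: "sigma_complete_family A \<Lambda>"
    and A_sub: "\<forall>l\<in>\<Lambda>. cstar_subalgebra (A l) \<and> separable_set (A l)"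
    and A_dense: "closure (\<Union>(A ` \<Lambda>)) = UNIV"
    and B_fam: "sigma_complete_family B \<Lambda>'"
    and B_sub: "\<forall>l\<in>\<Lambda>'. cstar_subalgebra (B l) \<and> separable_set (B l)"
    and B_dense: "closure (\<Union>(B ` \<Lambda>')) = UNIV"
    and iso: "star_isomorphism \<Phi>"
  shows "(\<exists>\<Lambda>0 \<Lambda>0' \<phi>. club_by A \<Lambda> \<Lambda>0 \<and> club_by B \<Lambda>' \<Lambda>0' \<and> bij_betw \<phi> \<Lambda>0 \<Lambda>0'
            \<and> (\<forall>l\<in>\<Lambda>0. \<forall>m\<in>\<Lambda>0. A l \<subseteq> A m \<longleftrightarrow> B (\<phi> l) \<subseteq> B (\<phi> m))
            \<and> (\<forall>l\<in>\<Lambda>0. \<Phi> ` A l = B (\<phi> l)))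
       \<and> ((\<Lambda> = \<Lambda>' \<and> (\<forall>l\<in>\<Lambda>. \<forall>m\<in>\<Lambda>. A l \<subseteq> A m \<longleftrightarrow> B l \<subseteq> B m)) \<longrightarrow>
           (\<exists>\<Lambda>0. club_by A \<Lambda> \<Lambda>0 \<and> (\<forall>l\<in>\<Lambda>0. \<Phi> ` A l = B l)))"
proof -
  interpret AB: matching_families A \<Lambda> B \<Lambda>' \<Phi> "inv \<Phi>"
    using A_fam A_sub A_dense B_fam B_sub B_dense star_isomorphism_homeomorphism[OF iso]
    by unfold_locales (simp_all add: cstar_subalgebra_def)
  have "\<exists>\<Lambda>0. club_by A \<Lambda> \<Lambda>0 \<and> (\<forall>l\<in>\<Lambda>0. \<Phi> ` A l = B l)"
    if "\<Lambda> = \<Lambda>'" "\<forall>l\<in>\<Lambda>. \<forall>m\<in>\<Lambda>. A l \<subseteq> A m \<longleftrightarrow> B l \<subseteq> B m"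
  proof -
    interpret common_index_families A \<Lambda> B \<Phi> "inv \<Phi>"
      using AB.matching_families_axioms that
      by (intro common_index_families.intro common_index_families_axioms.intro) simp_all
    show ?thesis
      using club_fixed unfolding fixed_def by blast
  qed
  then show ?thesis
    using AB.matched_clubs by blast
qed

end
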